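(* In the augmented graph setting of the context, suppose $\sigma,\kappa$ satisfy $\sigma\ge\sigma_i$ and $\kappa\ge\kappa_i$ for all $i$, and that for every virtual edge between center node $i$ and virtual node $(i,j)$ the weight satisfies $\mu_{ij}^2=\frac{\lambda_{\min}^+(L)}{\sigma\kappa_i}L_{i,j}$. Then $$\lambda_{\min}^+(\tilde L)\ge\frac{\lambda_{\min}^+(L)}{2\sigma\kappa},\qquad \tilde L=\Sigma^{-1/2}AA^T\Sigma^{-1/2}.$$
   Context: $G$ is a connected undirected graph on $n$ nodes with edge set $E^{\rm comm}$ of size $E$. For each $i$, $\sigma_i>0$ and $L_{i,j}>0$ ($j=1,\dots,m$), and $\kappa_i=1+\sigma_i^{-1}\sum_{j=1}^mL_{i,j}$. The augmented graph has $n(1+m)$ nodes (center nodes $i$ and virtual nodes $(i,j)$) and edges: those of $G$ plus the virtual edges $i$–$(i,j)$, each with a fixed orientation. With weights $\mu_{k\ell}>0$ (arbitrary on edges of $G$), $A\in\mathbb{R}^{n(1+m)\times(E+nm)}$ is defined by $Ae_{k\ell}=\mu_{k\ell}(e^{(k)}-e^{(\ell)})$, and $L=A_{\rm comm}A_{\rm comm}^T\in\mathbb{R}^{n\times n}$ where $A_{\rm comm}e_{k\ell}=\mu_{k\ell}(e^{(k)}-e^{(\ell)})$ for $(k,\ell)\in E^{\rm comm}$ (the weighted Laplacian of $G$). $\Sigma$ is the diagonal matrix with $\sigma_i$ at center node $i$ and $L_{i,j}$ at virtual node $(i,j)$. $\lambda_{\min}^+$ denotes the smallest nonzero eigenvalue.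 *)

theory Defs
  imports Main "HOL.Real" Complex_Main
begin

(* Nodes of the augmented graph: center node i, virtual node (i,j). *)
datatype anode = Cn nat | Vn nat nat

(* Edges of the augmented graph: communication edge (k,l) oriented k->l,
   virtual edge between center i and virtual node (i,j) oriented i->(i,j). *)
datatype aedge = Ec nat nat | Ev nat nat

definition graph_connected :: "nat \<Rightarrow> (nat \<times> nat) set \<Rightarrow> bool" where
  "graph_connected n E \<longleftrightarrow>
     (\<forall>i<n. \<forall>j<n. (\<lambda>a b. (a, b) \<in> E \<or> (b, a) \<in> E)\<^sup>*\<^sup>* i j)"

definition aug_nodes :: "nat \<Rightarrow> nat \<Rightarrow> anode set" where
  "aug_nodes n m = Cn ` {..<n} \<union> {Vn i j | i j. i < n \<and> j < m}"

definition aug_edges :: "(nat \<times> nat) set \<Rightarrow> nat \<Rightarrow> nat \<Rightarrow> aedge set" where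
  "aug_edges E n m = (\<lambda>(k, l). Ec k l) ` E \<union> {Ev i j | i j. i < n \<and> j < m}"

fun incA :: "(aedge \<Rightarrow> real) \<Rightarrow> anode \<Rightarrow> aedge \<Rightarrow> real" where
  "incA mu x (Ec k l) = mu (Ec k l) * ((if x = Cn k then 1 else 0) - (if x = Cn l then 1 else 0))"
| "incA mu x (Ev i j) = mu (Ev i j) * ((if x = Cn i then 1 else 0) - (if x = Vn i j then 1 else 0))"

definition AAT :: "(nat \<times> nat) set \<Rightarrow> nat \<Rightarrow> nat \<Rightarrow> (aedge \<Rightarrow> real) \<Rightarrow> anode \<Rightarrow> anode \<Rightarrow> real" where
  "AAT E n m mu x y = (\<Sum>e\<in>aug_edges E n m. incA mu x e * incA mu y e)"

definition incAc :: "(aedge \<Rightarrow> real) \<Rightarrow> nat \<Rightarrow> nat \<times> nat \<Rightarrow> real" where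
  "incAc mu i e = mu (Ec (fst e) (snd e)) *
     ((if i = fst e then 1 else 0) - (if i = snd e then 1 else 0))"

definition lapL :: "(nat \<times> nat) set \<Rightarrow> (aedge \<Rightarrow> real) \<Rightarrow> nat \<Rightarrow> nat \<Rightarrow> real" where
  "lapL E mu i k = (\<Sum>e\<in>E. incAc mu i e * incAc mu k e)"

fun Sigma_diag :: "(nat \<Rightarrow> real) \<Rightarrow> (nat \<Rightarrow> nat \<Rightarrow> real) \<Rightarrow> anode \<Rightarrow> real" where
  "Sigma_diag sigma Lw (Cn i) = sigma i"
| "Sigma_diag sigma Lw (Vn i j) = Lw i j"

definition Ltilde :: "(nat \<times> nat) set \<Rightarrow> nat \<Rightarrow> nat \<Rightarrow> (aedge \<Rightarrow> real) \<Rightarrow> (nat \<Rightarrow> real)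
    \<Rightarrow> (nat \<Rightarrow> nat \<Rightarrow> real) \<Rightarrow> anode \<Rightarrow> anode \<Rightarrow> real" where
  "Ltilde E n m mu sigma Lw x y =
     AAT E n m mu x y / (sqrt (Sigma_diag sigma Lw x) * sqrt (Sigma_diag sigma Lw y))"

definition kappa :: "(nat \<Rightarrow> real) \<Rightarrow> (nat \<Rightarrow> nat \<Rightarrow> real) \<Rightarrow> nat \<Rightarrow> nat \<Rightarrow> real" where
  "kappa sigma Lw m i = 1 + (\<Sum>j<m. Lw i j) / sigma i"

definition is_eigenvalue :: "'v set \<Rightarrow> ('v \<Rightarrow> 'v \<Rightarrow> real) \<Rightarrow> real \<Rightarrow> bool" where
  "is_eigenvalue V M lam \<longleftrightarrow>
     (\<exists>v. (\<exists>x\<in>V. v x \<noteq> 0) \<and> (\<forall>x\<in>V. (\<Sum>y\<in>V. M x y * v y) = lam * v x))"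

definition lambda_min_pos :: "'v set \<Rightarrow> ('v \<Rightarrow> 'v \<Rightarrow> real) \<Rightarrow> real" where
  "lambda_min_pos V M = Min {lam. is_eigenvalue V M lam \<and> lam \<noteq> 0}"

end

(*
  Via v = Sigma^(1/2) y, the quadratic form of Ltilde becomes the Dirichlet energy of y on G plus
  the virtual-edge energy sum mu_ij^2 (y_i - y_ij)^2, the squared norm of v becomes the
  Sigma-weighted squared norm of y, and orthogonality to the kernel vector Sigma^(1/2) 1 says that y
  has Sigma-weighted mean zero.  By the variational characterisation of lambda_min^+ it suffices to
  bound this Rayleigh quotient from below.  Shifting y by the mean c of its centre values only
  increases the weighted norm; each star (centre i with its virtual nodes) then contributes at most
  2 sigma_i kappa_i (y_i - c)^2 + 2 sum_j L_ij (y_ij - y_i)^2.  The first term is controlled by the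
  Poincare inequality lambda_min^+(L) sum_i (y_i - c)^2 <= y^T L y on the connected graph G, and
  the second by the choice mu_ij^2 = lambda_min^+(L) L_ij / (sigma kappa_i).
*)
theory Submission
  imports Defs "HOL-Analysis.Analysis" "Jordan_Normal_Form.Char_Poly"
begin

section \<open>Quadratic forms on a finite index set\<close>

definition quad_form :: "'v set \<Rightarrow> ('v \<Rightarrow> 'v \<Rightarrow> real) \<Rightarrow> ('v \<Rightarrow> real) \<Rightarrow> real" where
  "quad_form V M y = (\<Sum>x\<in>V. \<Sum>z\<in>V. y x * M x z * y z)"

definition inner_on :: "'v set \<Rightarrow> ('v \<Rightarrow> real) \<Rightarrow> ('v \<Rightarrow> real) \<Rightarrow> real" where
  "inner_on V u y = (\<Sum>x\<in>V. u x * y x)"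

definition sum_sq :: "'v set \<Rightarrow> ('v \<Rightarrow> real) \<Rightarrow> real" where
  "sum_sq V y = (\<Sum>x\<in>V. (y x)\<^sup>2)"

definition mat_vec :: "'v set \<Rightarrow> ('v \<Rightarrow> 'v \<Rightarrow> real) \<Rightarrow> ('v \<Rightarrow> real) \<Rightarrow> 'v \<Rightarrow> real" where
  "mat_vec V M y x = (\<Sum>z\<in>V. M x z * y z)"

definition symmetric_on :: "'v set \<Rightarrow> ('v \<Rightarrow> 'v \<Rightarrow> real) \<Rightarrow> bool" where
  "symmetric_on V M \<longleftrightarrow> (\<forall>x\<in>V. \<forall>z\<in>V. M x z = M z x)"

lemma quad_form_cong: "(\<And>x. x \<in> V \<Longrightarrow> y x = y' x) \<Longrightarrow> quad_form V M y = quad_form V M y'"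
  unfolding quad_form_def by (intro sum.cong refl) auto

lemma inner_on_cong: "(\<And>x. x \<in> V \<Longrightarrow> y x = y' x) \<Longrightarrow> inner_on V u y = inner_on V u y'"
  unfolding inner_on_def by (intro sum.cong refl) auto

lemma sum_sq_cong: "(\<And>x. x \<in> V \<Longrightarrow> y x = y' x) \<Longrightarrow> sum_sq V y = sum_sq V y'"
  unfolding sum_sq_def by (intro sum.cong refl) auto

lemma inner_on_commute: "inner_on V u y = inner_on V y u"
  unfolding inner_on_def by (simp add: mult.commute)

lemma sum_sq_nonneg: "0 \<le> sum_sq V y"
  unfolding sum_sq_def by (simp add: sum_nonneg)

lemma sum_sq_eq_0_iff: "finite V \<Longrightarrow> sum_sq V y = 0 \<longleftrightarrow> (\<forall>x\<in>V. y x = 0)"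
  unfolding sum_sq_def by (simp add: sum_nonneg_eq_0_iff)

lemma sum_sq_pos: "finite V \<Longrightarrow> \<exists>x\<in>V. y x \<noteq> 0 \<Longrightarrow> 0 < sum_sq V y"
  using sum_sq_nonneg[of V y] sum_sq_eq_0_iff[of V y] by fastforce

lemma quad_form_eq_inner_on: "quad_form V M y = inner_on V y (mat_vec V M y)"
  unfolding quad_form_def inner_on_def mat_vec_def sum_distrib_left
  by (simp add: mult.assoc)

lemma inner_on_mat_vec_commute:
  assumes "symmetric_on V M"
  shows "inner_on V u (mat_vec V M y) = inner_on V y (mat_vec V M u)"
proof -
  have "inner_on V u (mat_vec V M y) = (\<Sum>x\<in>V. \<Sum>z\<in>V. u x * M x z * y z)"
    unfolding inner_on_def mat_vec_def sum_distrib_left by (simp add: mult.assoc)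
  also have "\<dots> = (\<Sum>z\<in>V. \<Sum>x\<in>V. u x * M x z * y z)" by (rule sum.swap)
  also have "\<dots> = inner_on V y (mat_vec V M u)"
    unfolding inner_on_def mat_vec_def sum_distrib_left
    using assms by (intro sum.cong refl) (auto simp: symmetric_on_def mult_ac)
  finally show ?thesis .
qed

lemma inner_on_add_scaled: "inner_on V u (\<lambda>x. a x + t * b x) = inner_on V u a + t * inner_on V u b"
  unfolding inner_on_def sum_distrib_left sum.distrib[symmetric]
  by (intro sum.cong refl) (simp add: algebra_simps)

lemma inner_on_scale: "inner_on V u (\<lambda>x. t * y x) = t * inner_on V u y"
  using inner_on_add_scaled[of V u "\<lambda>_. 0" t y] by (simp add: inner_on_def)

lemma sum_sq_add_scaled:
  "sum_sq V (\<lambda>x. a x + t * b x) = sum_sq V a + 2 * t * inner_on V a b + t\<^sup>2 * sum_sq V b"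
  unfolding sum_sq_def inner_on_def sum_distrib_left power2_eq_square sum.distrib[symmetric]
  by (intro sum.cong refl) (simp add: algebra_simps)

lemma sum_sq_scale: "sum_sq V (\<lambda>x. t * y x) = t\<^sup>2 * sum_sq V y"
  unfolding sum_sq_def sum_distrib_left by (simp add: power_mult_distrib)

lemma quad_form_add_scaled:
  assumes "symmetric_on V M"
  shows "quad_form V M (\<lambda>x. a x + t * b x)
    = quad_form V M a + 2 * t * inner_on V b (mat_vec V M a) + t\<^sup>2 * quad_form V M b"
proof -
  have "quad_form V M (\<lambda>x. a x + t * b x) = quad_form V M a
      + t * (inner_on V a (mat_vec V M b) + inner_on V b (mat_vec V M a)) + t\<^sup>2 * quad_form V M b"
    unfolding quad_form_def inner_on_def mat_vec_def sum_distrib_left power2_eq_square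
      sum.distrib[symmetric]
    by (intro sum.cong refl) (simp add: algebra_simps)
  then show ?thesis using inner_on_mat_vec_commute[OF assms, of a b] by simp
qed

lemma quad_form_scale: "quad_form V M (\<lambda>x. t * y x) = t\<^sup>2 * quad_form V M y"
  unfolding quad_form_def sum_distrib_left power2_eq_square
  by (intro sum.cong refl) (simp add: algebra_simps)

lemma exists_nonzero_orthogonal:
  assumes "finite V" "x \<in> V" "x' \<in> V" "x \<noteq> x'"
  shows "\<exists>z. inner_on V w z = 0 \<and> (\<exists>x\<in>V. z x \<noteq> 0)"
proof (cases "w x = 0")
  case True
  have "inner_on V w (\<lambda>y. if y = x then 1 else 0) = (\<Sum>y\<in>V. if y = x then w y else 0)"
    unfolding inner_on_def by (intro sum.cong) auto
  also have "\<dots> = 0" using True assms(1,2) by simp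
  finally show ?thesis using assms(2) by (intro exI[of _ "\<lambda>y. if y = x then 1 else 0"]) auto
next
  case False
  define z where "z = (\<lambda>y. (if y = x then w x' else 0) - (if y = x' then w x else 0))"
  have "inner_on V w z = 0"
    unfolding inner_on_def z_def right_diff_distrib sum_subtractf
    using assms by (simp add: sum.delta if_distrib[of "\<lambda>t. _ * t"] cong: if_cong)
  moreover have "z x' \<noteq> 0" using False assms(4) by (simp add: z_def)
  ultimately show ?thesis using assms(3) by blast
qed

lemma linear_plus_quadratic_nonneg_imp:
  fixes a b :: real
  assumes "\<forall>t. 0 \<le> t * a + t\<^sup>2 * b"
  shows "a = 0"
proof (rule ccontr)
  assume "a \<noteq> 0"
  define t where "t = - a / (\<bar>b\<bar> + 1)"
  have "t\<^sup>2 * b \<le> t\<^sup>2 * \<bar>b\<bar>" by (simp add: mult_left_mono)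
  also have "\<dots> = a\<^sup>2 / (\<bar>b\<bar> + 1) * (\<bar>b\<bar> / (\<bar>b\<bar> + 1))"
    by (simp add: t_def power_divide power2_eq_square)
  also have "\<dots> < a\<^sup>2 / (\<bar>b\<bar> + 1) * 1"
    using \<open>a \<noteq> 0\<close> by (intro mult_strict_left_mono) auto
  also have "\<dots> = - (t * a)" by (simp add: t_def power2_eq_square)
  finally show False using assms[rule_format, of t] by linarith
qed

section \<open>The smallest nonzero eigenvalue as a constrained Rayleigh minimum\<close>

lemma is_eigenvalue_iff:
  "is_eigenvalue V M lam \<longleftrightarrow>
     (\<exists>v. (\<exists>x\<in>V. v x \<noteq> 0) \<and> (\<forall>x\<in>V. mat_vec V M v x = lam * v x))"
  unfolding is_eigenvalue_def mat_vec_def ..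

lemma finite_eigenvalues:
  assumes "finite V"
  shows "finite {lam. is_eigenvalue V M lam}"
proof -
  obtain f where f: "bij_betw f {0..<card V} V"
    using ex_bij_betw_nat_finite[OF assms] by blast
  define N where "N = card V"
  define A where "A = Matrix.mat N N (\<lambda>(i, j). M (f i) (f j))"
  have A: "A \<in> carrier_mat N N" by (simp add: A_def)
  have "{lam. is_eigenvalue V M lam} \<subseteq> {lam. poly (char_poly A) lam = 0}"
  proof safe
    fix lam assume "is_eigenvalue V M lam"
    then obtain v where v: "\<exists>x\<in>V. v x \<noteq> 0" "\<forall>x\<in>V. mat_vec V M v x = lam * v x"
      unfolding is_eigenvalue_iff by blast
    define u where "u = Matrix.vec N (\<lambda>i. v (f i))"
    have "eigenvector A u lam" unfolding eigenvector_def
    proof (intro conjI)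
      show "u \<in> carrier_vec (dim_row A)" by (simp add: u_def A_def)
      obtain x where x: "x \<in> V" "v x \<noteq> 0" using v(1) by blast
      then obtain i where i: "i < N" "f i = x"
        using f unfolding N_def bij_betw_def by force
      show "u \<noteq> 0\<^sub>v (dim_row A)"
      proof
        assume "u = 0\<^sub>v (dim_row A)"
        then have "vec_index u i = 0" using i by (simp add: A_def)
        then show False using i x by (simp add: u_def)
      qed
      show "A *\<^sub>v u = lam \<cdot>\<^sub>v u"
      proof (rule eq_vecI)
        fix i assume "i < dim_vec (lam \<cdot>\<^sub>v u)"
        then have i: "i < N" by (simp add: u_def)
        then have fi: "f i \<in> V" using f unfolding N_def bij_betw_def by auto
        have "vec_index (A *\<^sub>v u) i = (\<Sum>j\<in>{0..<N}. M (f i) (f j) * v (f j))"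
          using i by (simp add: A_def u_def scalar_prod_def)
        also have "\<dots> = mat_vec V M v (f i)"
          using sum.reindex_bij_betw[OF f, of "\<lambda>y. M (f i) y * v y"]
          by (simp add: N_def mat_vec_def)
        also have "\<dots> = lam * v (f i)" using v(2) fi by blast
        finally show "vec_index (A *\<^sub>v u) i = vec_index (lam \<cdot>\<^sub>v u) i" using i by (simp add: u_def)
      qed (simp add: A_def u_def)
    qed
    then show "poly (char_poly A) lam = 0"
      using eigenvalue_root_char_poly[OF A] eigenvalue_def by blast
  qed
  moreover have "char_poly A \<noteq> 0" using degree_monic_char_poly[OF A] by auto
  ultimately show ?thesis using finite_subset poly_roots_finite by blast
qed

lemma quad_form_eigenvector:
  "(\<forall>x\<in>V. mat_vec V M v x = lam * v x) \<Longrightarrow> quad_form V M v = lam * sum_sq V v"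
  unfolding quad_form_eq_inner_on inner_on_def sum_sq_def sum_distrib_left
  by (intro sum.cong refl) (simp add: power2_eq_square)

lemma eigenvector_orthogonal_to_kernel:
  assumes "symmetric_on V M" and "\<forall>x\<in>V. mat_vec V M w x = 0"
    and "\<forall>x\<in>V. mat_vec V M v x = lam * v x" and "lam \<noteq> 0"
  shows "inner_on V w v = 0"
proof -
  have "lam * inner_on V w v = inner_on V w (mat_vec V M v)"
    unfolding inner_on_def sum_distrib_left using assms(3) by (intro sum.cong refl) simp
  also have "\<dots> = inner_on V v (mat_vec V M w)" by (rule inner_on_mat_vec_commute[OF assms(1)])
  also have "\<dots> = 0" using assms(2) by (simp add: inner_on_def)
  finally show ?thesis using assms(4) by simp
qed

lemma compact_orthogonal_unit_sphere:
  assumes "finite V"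
  shows "compact {y. (\<forall>x. x \<notin> V \<longrightarrow> y x = 0) \<and> inner_on V w y = 0 \<and> sum_sq V y = 1}"
    (is "compact ?K")
proof -
  define B where "B x = (if x \<in> V then {-1..1} else {0::real})" for x
  have "compactin (product_topology (\<lambda>_. euclidean) UNIV) (Pi\<^sub>E UNIV B)"
    by (subst compactin_PiE) (auto simp: B_def)
  then have "compact (Pi\<^sub>E UNIV B)" by (simp add: euclidean_product_topology)
  moreover have "closed ?K"
    unfolding inner_on_def sum_sq_def
    apply (intro closed_Collect_conj closed_Collect_all closed_Collect_imp open_Collect_const
        closed_Collect_eq)
     apply (intro continuous_intros continuous_on_product_coordinates)+
    done
  moreover have "?K \<subseteq> Pi\<^sub>E UNIV B"
  proof
    fix y assume y: "y \<in> ?K"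
    have "y x \<in> B x" if "x \<in> V" for x
    proof -
      have "(y x)\<^sup>2 \<le> sum_sq V y" unfolding sum_sq_def
        by (rule member_le_sum) (use that assms in auto)
      then have "\<bar>y x\<bar> \<le> 1" using y by (simp add: abs_square_le_1)
      then show ?thesis using that by (simp add: B_def abs_le_iff)
    qed
    then show "y \<in> Pi\<^sub>E UNIV B" using y by (auto simp: B_def)
  qed
  ultimately have "compact (Pi\<^sub>E UNIV B \<inter> ?K)" by (intro compact_Int_closed)
  moreover have "Pi\<^sub>E UNIV B \<inter> ?K = ?K" using \<open>?K \<subseteq> Pi\<^sub>E UNIV B\<close> by blast
  ultimately show ?thesis by simp
qed

lemma rayleigh_minimizer_exists:
  assumes fin: "finite V" and z: "inner_on V w z = 0" "\<exists>x\<in>V. z x \<noteq> 0"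
  obtains y0 where "inner_on V w y0 = 0" "sum_sq V y0 = 1"
    "\<forall>y. inner_on V w y = 0 \<longrightarrow> quad_form V M y0 * sum_sq V y \<le> quad_form V M y"
proof -
  define K where "K = {y. (\<forall>x. x \<notin> V \<longrightarrow> y x = 0) \<and> inner_on V w y = 0 \<and> sum_sq V y = 1}"
  define normalize where "normalize y = (\<lambda>x. if x \<in> V then y x / sqrt (sum_sq V y) else 0)" for y
  have normalize: "normalize y \<in> K" "quad_form V M (normalize y) = quad_form V M y / sum_sq V y"
    if "inner_on V w y = 0" "0 < sum_sq V y" for y
  proof -
    define c where "c = 1 / sqrt (sum_sq V y)"
    have "\<And>x. x \<in> V \<Longrightarrow> normalize y x = c * y x" by (simp add: normalize_def c_def)
    then have "inner_on V w (normalize y) = c * inner_on V w y"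
      "sum_sq V (normalize y) = c\<^sup>2 * sum_sq V y"
      "quad_form V M (normalize y) = c\<^sup>2 * quad_form V M y"
      by (simp_all only: inner_on_scale[symmetric] sum_sq_scale[symmetric]
          quad_form_scale[symmetric] cong: inner_on_cong sum_sq_cong quad_form_cong)
    moreover have "c\<^sup>2 = 1 / sum_sq V y" using that(2) by (simp add: c_def power_divide)
    ultimately show "normalize y \<in> K" "quad_form V M (normalize y) = quad_form V M y / sum_sq V y"
      using that by (auto simp: K_def normalize_def)
  qed
  have "compact K" unfolding K_def by (rule compact_orthogonal_unit_sphere[OF fin])
  moreover have "K \<noteq> {}" using normalize(1)[OF z(1) sum_sq_pos[OF fin z(2)]] by blast
  moreover have "continuous_on UNIV (quad_form V M)"
    unfolding quad_form_def by (intro continuous_intros continuous_on_product_coordinates)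
  then have "continuous_on K (quad_form V M)" by (rule continuous_on_subset) simp
  ultimately obtain y0 where y0: "y0 \<in> K" and min: "\<And>y. y \<in> K \<Longrightarrow> quad_form V M y0 \<le> quad_form V M y"
    using continuous_attains_inf[of K "quad_form V M"] by blast
  have "quad_form V M y0 * sum_sq V y \<le> quad_form V M y" if "inner_on V w y = 0" for y
  proof (cases "sum_sq V y = 0")
    case True
    then have "quad_form V M y = quad_form V M (\<lambda>x. 0 * y x)"
      using sum_sq_eq_0_iff[OF fin] by (auto intro: quad_form_cong)
    also have "\<dots> = 0" by (simp only: quad_form_scale) simp
    finally show ?thesis using True by simp
  next
    case False
    then have pos: "0 < sum_sq V y" using sum_sq_nonneg[of V y] by linarith
    have "quad_form V M y0 \<le> quad_form V M y / sum_sq V y"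
      using min[OF normalize(1)[OF that pos]] normalize(2)[OF that pos] by simp
    then show ?thesis using pos by (simp add: field_simps)
  qed
  then show ?thesis using that y0 by (auto simp: K_def)
qed

lemma rayleigh_minimizer_eigenvector:
  assumes fin: "finite V" and sym: "symmetric_on V M" and ker: "\<forall>x\<in>V. mat_vec V M w x = 0"
    and y0: "inner_on V w y0 = 0" "sum_sq V y0 = 1"
    and min: "\<forall>y. inner_on V w y = 0 \<longrightarrow> quad_form V M y0 * sum_sq V y \<le> quad_form V M y"
  shows "\<forall>x\<in>V. mat_vec V M y0 x = quad_form V M y0 * y0 x"
proof -
  define mu0 where "mu0 = quad_form V M y0"
  define h where "h = (\<lambda>x. mat_vec V M y0 x - mu0 * y0 x)"
  have "inner_on V w (mat_vec V M y0) = 0"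
    using inner_on_mat_vec_commute[OF sym, of w y0] ker by (simp add: inner_on_def)
  then have h_orth: "inner_on V w h = 0"
    using inner_on_add_scaled[of V w "mat_vec V M y0" "- mu0" y0] y0 by (simp add: h_def)
  have first_variation: "inner_on V h (mat_vec V M y0) - mu0 * inner_on V y0 h = sum_sq V h"
    unfolding inner_on_def sum_sq_def sum_distrib_left sum_subtractf[symmetric] h_def
    by (intro sum.cong refl) (simp add: power2_eq_square algebra_simps)
  \<comment> \<open>Perturbing the minimiser along \<open>h\<close>, which stays orthogonal to \<open>w\<close>, produces the linear
    term \<open>2 t sum_sq V h\<close>; minimality forces it to vanish.\<close>
  have "0 \<le> t * (2 * sum_sq V h) + t\<^sup>2 * (quad_form V M h - mu0 * sum_sq V h)" for t
  proof -
    have "inner_on V w (\<lambda>x. y0 x + t * h x) = 0"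
      using h_orth y0 by (simp add: inner_on_add_scaled)
    then have "mu0 * sum_sq V (\<lambda>x. y0 x + t * h x) \<le> quad_form V M (\<lambda>x. y0 x + t * h x)"
      using min mu0_def by blast
    then have "0 \<le> t * (2 * (inner_on V h (mat_vec V M y0) - mu0 * inner_on V y0 h))
        + t\<^sup>2 * (quad_form V M h - mu0 * sum_sq V h)"
      unfolding quad_form_add_scaled[OF sym] sum_sq_add_scaled inner_on_commute[of V h y0]
      using y0(2) by (simp add: mu0_def[symmetric] algebra_simps)
    then show ?thesis by (simp only: first_variation)
  qed
  then have "2 * sum_sq V h = 0" by (intro linear_plus_quadratic_nonneg_imp allI)
  then show ?thesis using sum_sq_eq_0_iff[OF fin] by (simp add: h_def mu0_def)
qed

lemma rayleigh_min_eigenpair: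
  assumes fin: "finite V" and sym: "symmetric_on V M" and ker: "\<forall>x\<in>V. mat_vec V M w x = 0"
    and two: "x \<in> V" "x' \<in> V" "x \<noteq> x'"
  obtains mu0 y0 where "\<exists>x\<in>V. y0 x \<noteq> 0" "inner_on V w y0 = 0"
    "\<forall>x\<in>V. mat_vec V M y0 x = mu0 * y0 x"
    "\<forall>y. inner_on V w y = 0 \<longrightarrow> mu0 * sum_sq V y \<le> quad_form V M y"
proof -
  obtain z where z: "inner_on V w z = 0" "\<exists>x\<in>V. z x \<noteq> 0"
    using exists_nonzero_orthogonal[OF fin two] by blast
  obtain y0 where y0: "inner_on V w y0 = 0" "sum_sq V y0 = 1"
    and min: "\<forall>y. inner_on V w y = 0 \<longrightarrow> quad_form V M y0 * sum_sq V y \<le> quad_form V M y"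
    by (rule rayleigh_minimizer_exists[OF fin z])
  have "\<exists>x\<in>V. y0 x \<noteq> 0" using y0(2) sum_sq_eq_0_iff[OF fin, of y0] by auto
  then show ?thesis
    by (rule that[OF _ y0(1) rayleigh_minimizer_eigenvector[OF fin sym ker y0 min] min])
qed

lemma lambda_min_pos_eqI:
  assumes fin: "finite V" and sym: "symmetric_on V M" and ker: "\<forall>x\<in>V. mat_vec V M w x = 0"
    and y0: "\<exists>x\<in>V. y0 x \<noteq> 0" "\<forall>x\<in>V. mat_vec V M y0 x = mu0 * y0 x" and "mu0 \<noteq> 0"
    and min: "\<forall>y. inner_on V w y = 0 \<longrightarrow> mu0 * sum_sq V y \<le> quad_form V M y"
  shows "lambda_min_pos V M = mu0"
  unfolding lambda_min_pos_def
proof (rule Min_eqI)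
  show "finite {lam. is_eigenvalue V M lam \<and> lam \<noteq> 0}"
    using finite_eigenvalues[OF fin, of M] by (rule finite_subset[rotated]) auto
  show "mu0 \<in> {lam. is_eigenvalue V M lam \<and> lam \<noteq> 0}"
    using y0 \<open>mu0 \<noteq> 0\<close> unfolding is_eigenvalue_iff by blast
  fix lam assume "lam \<in> {lam. is_eigenvalue V M lam \<and> lam \<noteq> 0}"
  then obtain v where v: "\<exists>x\<in>V. v x \<noteq> 0" "\<forall>x\<in>V. mat_vec V M v x = lam * v x"
    and "lam \<noteq> 0" unfolding is_eigenvalue_iff by blast
  have "inner_on V w v = 0"
    by (rule eigenvector_orthogonal_to_kernel[OF sym ker v(2) \<open>lam \<noteq> 0\<close>])
  then have "mu0 * sum_sq V v \<le> lam * sum_sq V v"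
    using min quad_form_eigenvector[OF v(2)] by auto
  then show "mu0 \<le> lam" using sum_sq_pos[OF fin v(1)] by simp
qed

lemma lambda_min_pos_ge:
  assumes fin: "finite V" and sym: "symmetric_on V M" and ker: "\<forall>x\<in>V. mat_vec V M w x = 0"
    and two: "x \<in> V" "x' \<in> V" "x \<noteq> x'" and "0 < c"
    and bound: "\<forall>y. inner_on V w y = 0 \<longrightarrow> c * sum_sq V y \<le> quad_form V M y"
  shows "c \<le> lambda_min_pos V M"
proof -
  obtain mu0 y0 where y0: "\<exists>x\<in>V. y0 x \<noteq> 0" "inner_on V w y0 = 0"
    "\<forall>x\<in>V. mat_vec V M y0 x = mu0 * y0 x"
    and min: "\<forall>y. inner_on V w y = 0 \<longrightarrow> mu0 * sum_sq V y \<le> quad_form V M y"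
    by (rule rayleigh_min_eigenpair[OF fin sym ker two])
  have "c * sum_sq V y0 \<le> mu0 * sum_sq V y0"
    using bound[rule_format, OF y0(2)] quad_form_eigenvector[OF y0(3)] by simp
  then have "c \<le> mu0" using sum_sq_pos[OF fin y0(1)] by simp
  moreover have "lambda_min_pos V M = mu0"
    using lambda_min_pos_eqI[OF fin sym ker y0(1,3) _ min] \<open>c \<le> mu0\<close> \<open>0 < c\<close> by simp
  ultimately show ?thesis by simp
qed

lemma lambda_min_pos_spectral_gap:
  assumes fin: "finite V" and sym: "symmetric_on V M" and ker: "\<forall>x\<in>V. mat_vec V M w x = 0"
    and two: "x \<in> V" "x' \<in> V" "x \<noteq> x'"
    and pos: "\<forall>y. inner_on V w y = 0 \<and> (\<exists>x\<in>V. y x \<noteq> 0) \<longrightarrow> 0 < quad_form V M y"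
  shows "0 < lambda_min_pos V M"
    and "\<forall>y. inner_on V w y = 0 \<longrightarrow> lambda_min_pos V M * sum_sq V y \<le> quad_form V M y"
proof -
  obtain mu0 y0 where y0: "\<exists>x\<in>V. y0 x \<noteq> 0" "inner_on V w y0 = 0"
    "\<forall>x\<in>V. mat_vec V M y0 x = mu0 * y0 x"
    and min: "\<forall>y. inner_on V w y = 0 \<longrightarrow> mu0 * sum_sq V y \<le> quad_form V M y"
    by (rule rayleigh_min_eigenpair[OF fin sym ker two])
  have "0 < mu0 * sum_sq V y0"
    using pos[rule_format, OF conjI[OF y0(2,1)]] quad_form_eigenvector[OF y0(3)] by simp
  then have "0 < mu0" using sum_sq_nonneg[of V y0] by (simp add: zero_less_mult_iff)
  then have "lambda_min_pos V M = mu0"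
    using lambda_min_pos_eqI[OF fin sym ker y0(1,3) _ min] by simp
  then show "0 < lambda_min_pos V M"
    and "\<forall>y. inner_on V w y = 0 \<longrightarrow> lambda_min_pos V M * sum_sq V y \<le> quad_form V M y"
    using \<open>0 < mu0\<close> min by simp_all
qed

section \<open>The weighted graph Laplacian\<close>

definition dirichlet_energy :: "(nat \<times> nat) set \<Rightarrow> (aedge \<Rightarrow> real) \<Rightarrow> (nat \<Rightarrow> real) \<Rightarrow> real" where
  "dirichlet_energy E mu y = (\<Sum>(k, l)\<in>E. (mu (Ec k l))\<^sup>2 * (y k - y l)\<^sup>2)"

lemma dirichlet_energy_nonneg: "0 \<le> dirichlet_energy E mu y"
  unfolding dirichlet_energy_def by (intro sum_nonneg) (auto simp: case_prod_beta)

lemma dirichlet_energy_shift: "dirichlet_energy E mu (\<lambda>i. y i - c) = dirichlet_energy E mu y"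
  unfolding dirichlet_energy_def by simp

lemma quad_form_gram:
  "quad_form V (\<lambda>x z. \<Sum>e\<in>F. g x e * g z e) y = (\<Sum>e\<in>F. (\<Sum>x\<in>V. g x e * y x)\<^sup>2)"
proof -
  have "(\<Sum>e\<in>F. (\<Sum>x\<in>V. g x e * y x)\<^sup>2) = (\<Sum>e\<in>F. \<Sum>x\<in>V. \<Sum>z\<in>V. (g x e * y x) * (g z e * y z))"
    by (simp add: power2_eq_square sum_product)
  also have "\<dots> = (\<Sum>x\<in>V. \<Sum>e\<in>F. \<Sum>z\<in>V. (g x e * y x) * (g z e * y z))" by (rule sum.swap)
  also have "\<dots> = (\<Sum>x\<in>V. \<Sum>z\<in>V. \<Sum>e\<in>F. (g x e * y x) * (g z e * y z))"
    by (intro sum.cong refl) (rule sum.swap)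
  also have "\<dots> = quad_form V (\<lambda>x z. \<Sum>e\<in>F. g x e * g z e) y"
    unfolding quad_form_def sum_distrib_left sum_distrib_right
    by (intro sum.cong refl) (simp add: algebra_simps)
  finally show ?thesis by simp
qed

lemma mat_vec_gram_eq_0:
  assumes "\<forall>e\<in>F. (\<Sum>z\<in>V. g z e * w z) = 0"
  shows "mat_vec V (\<lambda>x z. \<Sum>e\<in>F. g x e * g z e) w x = 0"
proof -
  have "mat_vec V (\<lambda>x z. \<Sum>e\<in>F. g x e * g z e) w x = (\<Sum>e\<in>F. g x e * (\<Sum>z\<in>V. g z e * w z))"
    unfolding mat_vec_def sum_distrib_left sum_distrib_right
    by (subst sum.swap) (simp add: mult.assoc)
  then show ?thesis using assms by simp
qed

lemma sum_incAc:
  assumes "fst e < n" "snd e < n"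
  shows "(\<Sum>i<n. incAc mu i e * y i) = mu (Ec (fst e) (snd e)) * (y (fst e) - y (snd e))"
proof -
  have "(\<Sum>i<n. incAc mu i e * y i) = mu (Ec (fst e) (snd e)) *
     ((\<Sum>i<n. if i = fst e then y i else 0) - (\<Sum>i<n. if i = snd e then y i else 0))"
    unfolding incAc_def sum_distrib_left sum_subtractf[symmetric]
    by (intro sum.cong refl) (simp add: algebra_simps)
  then show ?thesis using assms by simp
qed

lemma lapL_gram: "lapL E mu = (\<lambda>i k. \<Sum>e\<in>E. incAc mu i e * incAc mu k e)"
  by (intro ext) (simp add: lapL_def)

lemma symmetric_on_lapL: "symmetric_on V (lapL E mu)"
  unfolding symmetric_on_def lapL_def by (simp add: mult.commute)

lemma quad_form_lapL:
  assumes "E \<subseteq> {..<n} \<times> {..<n}"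
  shows "quad_form {..<n} (lapL E mu) y = dirichlet_energy E mu y"
  unfolding lapL_gram quad_form_gram dirichlet_energy_def case_prod_beta
  using assms by (intro sum.cong refl) (auto simp: sum_incAc power_mult_distrib)

lemma mat_vec_lapL_const:
  assumes "E \<subseteq> {..<n} \<times> {..<n}"
  shows "mat_vec {..<n} (lapL E mu) (\<lambda>_. 1) i = 0"
  unfolding lapL_gram
proof (intro mat_vec_gram_eq_0 ballI)
  fix e assume "e \<in> E"
  with assms have "fst e < n" "snd e < n" by auto
  from sum_incAc[OF this, of mu "\<lambda>_. 1"] show "(\<Sum>z<n. incAc mu z e * 1) = 0" by simp
qed

lemma dirichlet_energy_eq_0_imp_constant:
  assumes E_sub: "E \<subseteq> {..<n} \<times> {..<n}" and pos: "\<forall>(k, l)\<in>E. 0 < mu (Ec k l)"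
    and conn: "graph_connected n E" and "dirichlet_energy E mu y = 0" and "i < n" "j < n"
  shows "y i = y j"
proof -
  have "finite E" using E_sub finite_subset by blast
  then have "\<forall>(k, l)\<in>E. (mu (Ec k l))\<^sup>2 * (y k - y l)\<^sup>2 = 0"
    using assms(4) unfolding dirichlet_energy_def
    by (subst (asm) sum_nonneg_eq_0_iff) (auto simp: case_prod_beta)
  then have edge: "y k = y l" if "(k, l) \<in> E" for k l
    using pos that by fastforce
  have "(\<lambda>a b. (a, b) \<in> E \<or> (b, a) \<in> E)\<^sup>*\<^sup>* i j"
    using conn \<open>i < n\<close> \<open>j < n\<close> unfolding graph_connected_def by blast
  then show ?thesis
    by (induction rule: rtranclp_induct) (auto dest: edge)
qed

lemma lapL_spectral_gap:
  assumes n: "2 \<le> n" and E_sub: "E \<subseteq> {..<n} \<times> {..<n}" and conn: "graph_connected n E"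
    and pos: "\<forall>(k, l)\<in>E. 0 < mu (Ec k l)"
  shows "0 < lambda_min_pos {..<n} (lapL E mu)"
    and "lambda_min_pos {..<n} (lapL E mu) * (\<Sum>i<n. (y i - (\<Sum>k<n. y k) / n)\<^sup>2)
      \<le> dirichlet_energy E mu y"
proof -
  let ?V = "{..<n}" and ?one = "\<lambda>_. 1 :: real"
  have ker: "\<forall>i\<in>?V. mat_vec ?V (lapL E mu) ?one i = 0"
    using mat_vec_lapL_const[OF E_sub] by blast
  have "0 < quad_form ?V (lapL E mu) y"
    if "inner_on ?V ?one y = 0" "\<exists>i\<in>?V. y i \<noteq> 0" for y
  proof -
    have "dirichlet_energy E mu y \<noteq> 0"
    proof
      assume zero: "dirichlet_energy E mu y = 0"
      define a where "a = y 0"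
      have const: "y i = a" if "i < n" for i
        unfolding a_def
        by (rule dirichlet_energy_eq_0_imp_constant[OF E_sub pos conn zero that]) (use n in simp)
      then have "inner_on ?V ?one y = n * a" by (simp add: inner_on_def)
      then show False using that const n by auto
    qed
    then show ?thesis
      using dirichlet_energy_nonneg[of E mu y] quad_form_lapL[OF E_sub] by simp
  qed
  then have gap: "0 < lambda_min_pos ?V (lapL E mu)"
    "\<forall>y. inner_on ?V ?one y = 0 \<longrightarrow>
      lambda_min_pos ?V (lapL E mu) * sum_sq ?V y \<le> quad_form ?V (lapL E mu) y"
    using lambda_min_pos_spectral_gap[OF _ symmetric_on_lapL ker, of 0 1] n by auto
  then show "0 < lambda_min_pos ?V (lapL E mu)" by simp
  define c where "c = (\<Sum>k<n. y k) / n"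
  have "inner_on ?V ?one (\<lambda>i. y i - c) = 0"
    using n by (simp add: inner_on_def sum_subtractf c_def)
  from gap(2)[rule_format, OF this]
  show "lambda_min_pos ?V (lapL E mu) * (\<Sum>i<n. (y i - (\<Sum>k<n. y k) / n)\<^sup>2)
    \<le> dirichlet_energy E mu y"
    by (simp add: sum_sq_def quad_form_lapL[OF E_sub] dirichlet_energy_shift c_def)
qed

section \<open>The augmented graph\<close>

lemma aug_nodes_eq: "aug_nodes n m = Cn ` {..<n} \<union> (\<lambda>(i, j). Vn i j) ` ({..<n} \<times> {..<m})"
  unfolding aug_nodes_def by auto

lemma finite_aug_nodes: "finite (aug_nodes n m)"
  unfolding aug_nodes_eq by simp

lemma sum_aug_nodes:
  "(\<Sum>x\<in>aug_nodes n m. f x) = (\<Sum>i<n. f (Cn i)) + (\<Sum>i<n. \<Sum>j<m. f (Vn i j))"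
proof -
  have "(\<Sum>x\<in>aug_nodes n m. f x)
      = (\<Sum>x\<in>Cn ` {..<n}. f x) + (\<Sum>x\<in>(\<lambda>(i, j). Vn i j) ` ({..<n} \<times> {..<m}). f x)"
    unfolding aug_nodes_eq by (rule sum.union_disjoint) auto
  also have "\<dots> = (\<Sum>i<n. f (Cn i)) + (\<Sum>(i, j)\<in>{..<n} \<times> {..<m}. f (Vn i j))"
    by (subst (1 2) sum.reindex) (auto simp: inj_on_def case_prod_beta)
  finally show ?thesis by (simp add: sum.cartesian_product)
qed

lemma sum_aug_edges:
  assumes "finite E"
  shows "(\<Sum>e\<in>aug_edges E n m. f e) = (\<Sum>(k, l)\<in>E. f (Ec k l)) + (\<Sum>i<n. \<Sum>j<m. f (Ev i j))"
proof -
  have eq: "aug_edges E n m = (\<lambda>(k, l). Ec k l) ` E \<union> (\<lambda>(i, j). Ev i j) ` ({..<n} \<times> {..<m})"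
    unfolding aug_edges_def by auto
  have "(\<Sum>e\<in>aug_edges E n m. f e)
      = (\<Sum>e\<in>(\<lambda>(k, l). Ec k l) ` E. f e) + (\<Sum>e\<in>(\<lambda>(i, j). Ev i j) ` ({..<n} \<times> {..<m}). f e)"
    unfolding eq by (rule sum.union_disjoint) (use assms in auto)
  also have "\<dots> = (\<Sum>(k, l)\<in>E. f (Ec k l)) + (\<Sum>(i, j)\<in>{..<n} \<times> {..<m}. f (Ev i j))"
    by (subst (1 2) sum.reindex) (auto simp: inj_on_def case_prod_beta)
  finally show ?thesis by (simp add: sum.cartesian_product)
qed

lemma sum_incA_Ec:
  assumes "k < n" "l < n"
  shows "(\<Sum>x\<in>aug_nodes n m. incA mu x (Ec k l) * y x) = mu (Ec k l) * (y (Cn k) - y (Cn l))"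
proof -
  have "(\<Sum>x\<in>aug_nodes n m. incA mu x (Ec k l) * y x) = mu (Ec k l) *
     ((\<Sum>x\<in>aug_nodes n m. if x = Cn k then y x else 0) - (\<Sum>x\<in>aug_nodes n m. if x = Cn l then y x else 0))"
    unfolding sum_distrib_left sum_subtractf[symmetric] by (intro sum.cong refl) simp
  then show ?thesis using assms finite_aug_nodes[of n m] by (simp add: aug_nodes_def)
qed

lemma sum_incA_Ev:
  assumes "i < n" "j < m"
  shows "(\<Sum>x\<in>aug_nodes n m. incA mu x (Ev i j) * y x) = mu (Ev i j) * (y (Cn i) - y (Vn i j))"
proof -
  have "(\<Sum>x\<in>aug_nodes n m. incA mu x (Ev i j) * y x) = mu (Ev i j) *
     ((\<Sum>x\<in>aug_nodes n m. if x = Cn i then y x else 0) - (\<Sum>x\<in>aug_nodes n m. if x = Vn i j then y x else 0))"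
    unfolding sum_distrib_left sum_subtractf[symmetric] by (intro sum.cong refl) simp
  then show ?thesis using assms finite_aug_nodes[of n m] by (simp add: aug_nodes_def)
qed

lemma AAT_gram: "AAT E n m mu = (\<lambda>x z. \<Sum>e\<in>aug_edges E n m. incA mu x e * incA mu z e)"
  by (intro ext) (simp add: AAT_def)

lemma quad_form_AAT:
  assumes E_sub: "E \<subseteq> {..<n} \<times> {..<n}"
  shows "quad_form (aug_nodes n m) (AAT E n m mu) y = dirichlet_energy E mu (\<lambda>i. y (Cn i))
    + (\<Sum>i<n. \<Sum>j<m. (mu (Ev i j))\<^sup>2 * (y (Cn i) - y (Vn i j))\<^sup>2)"
proof -
  have "finite E" using E_sub finite_subset by blast
  have comm: "(\<Sum>(k, l)\<in>E. (\<Sum>x\<in>aug_nodes n m. incA mu x (Ec k l) * y x)\<^sup>2)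
      = dirichlet_energy E mu (\<lambda>i. y (Cn i))"
    unfolding dirichlet_energy_def using E_sub
    by (intro sum.cong refl) (auto simp: sum_incA_Ec power_mult_distrib simp del: incA.simps)
  have virt: "(\<Sum>i<n. \<Sum>j<m. (\<Sum>x\<in>aug_nodes n m. incA mu x (Ev i j) * y x)\<^sup>2)
      = (\<Sum>i<n. \<Sum>j<m. (mu (Ev i j))\<^sup>2 * (y (Cn i) - y (Vn i j))\<^sup>2)"
    by (intro sum.cong refl) (simp add: sum_incA_Ev power_mult_distrib del: incA.simps)
  have "quad_form (aug_nodes n m) (AAT E n m mu) y
      = (\<Sum>e\<in>aug_edges E n m. (\<Sum>x\<in>aug_nodes n m. incA mu x e * y x)\<^sup>2)"
    unfolding AAT_gram by (rule quad_form_gram)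
  also have "\<dots> = (\<Sum>(k, l)\<in>E. (\<Sum>x\<in>aug_nodes n m. incA mu x (Ec k l) * y x)\<^sup>2)
      + (\<Sum>i<n. \<Sum>j<m. (\<Sum>x\<in>aug_nodes n m. incA mu x (Ev i j) * y x)\<^sup>2)"
    by (rule sum_aug_edges[OF \<open>finite E\<close>])
  finally show ?thesis unfolding comm virt .
qed

lemma mat_vec_AAT_const:
  assumes "E \<subseteq> {..<n} \<times> {..<n}"
  shows "mat_vec (aug_nodes n m) (AAT E n m mu) (\<lambda>_. 1) x = 0"
  unfolding AAT_gram
proof (intro mat_vec_gram_eq_0 ballI)
  fix e assume "e \<in> aug_edges E n m"
  then consider k l where "(k, l) \<in> E" "e = Ec k l" | i j where "i < n" "j < m" "e = Ev i j"
    unfolding aug_edges_def by auto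
  then show "(\<Sum>z\<in>aug_nodes n m. incA mu z e * 1) = 0"
  proof cases
    case 1
    with assms have "k < n" "l < n" by auto
    from sum_incA_Ec[OF this, where m=m and mu=mu and y="\<lambda>_. 1"] show ?thesis using 1 by simp
  next
    case 2
    from sum_incA_Ev[OF 2(1,2), where mu=mu and y="\<lambda>_. 1"] show ?thesis using 2 by simp
  qed
qed

lemma quad_form_diag_scaled:
  "quad_form V (\<lambda>x z. M x z / (d x * d z)) v = quad_form V M (\<lambda>x. v x / d x)"
  unfolding quad_form_def by (intro sum.cong refl) simp

lemma mat_vec_diag_scaled:
  assumes "\<forall>z\<in>V. d z \<noteq> 0"
  shows "mat_vec V (\<lambda>x z. M x z / (d x * d z)) d x = mat_vec V M (\<lambda>_. 1) x / d x"
  unfolding mat_vec_def sum_divide_distrib using assms by (intro sum.cong refl) simp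

lemma Ltilde_diag_scaled:
  fixes sigma :: "nat \<Rightarrow> real"
  shows "Ltilde E n m mu sigma Lw
    = (\<lambda>x z. AAT E n m mu x z / (sqrt (Sigma_diag sigma Lw x) * sqrt (Sigma_diag sigma Lw z)))"
  by (intro ext) (simp add: Ltilde_def)

lemma symmetric_on_Ltilde:
  fixes sigma :: "nat \<Rightarrow> real"
  shows "symmetric_on V (Ltilde E n m mu sigma Lw)"
  unfolding symmetric_on_def Ltilde_def AAT_def by (simp add: mult.commute)

lemma weighted_sum_sq_le_shift:
  fixes p u :: "'v \<Rightarrow> real"
  assumes "\<forall>x\<in>V. 0 \<le> p x" and "(\<Sum>x\<in>V. p x * u x) = 0"
  shows "(\<Sum>x\<in>V. p x * (u x)\<^sup>2) \<le> (\<Sum>x\<in>V. p x * (u x - c)\<^sup>2)"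
proof -
  have "(\<Sum>x\<in>V. p x * (u x - c)\<^sup>2)
      = (\<Sum>x\<in>V. p x * (u x)\<^sup>2) - 2 * c * (\<Sum>x\<in>V. p x * u x) + c\<^sup>2 * (\<Sum>x\<in>V. p x)"
    by (simp add: power2_diff algebra_simps sum.distrib sum_subtractf sum_distrib_left
        sum_distrib_right)
  moreover have "0 \<le> (\<Sum>x\<in>V. p x)" using assms(1) by (simp add: sum_nonneg)
  ultimately show ?thesis using assms(2) by simp
qed

lemma star_variance_bound:
  fixes s a c :: real and L z :: "'j \<Rightarrow> real"
  assumes "0 \<le> s" and "\<forall>j\<in>J. 0 \<le> L j"
  shows "s * (a - c)\<^sup>2 + (\<Sum>j\<in>J. L j * (z j - c)\<^sup>2)
    \<le> 2 * (s + (\<Sum>j\<in>J. L j)) * (a - c)\<^sup>2 + 2 * (\<Sum>j\<in>J. L j * (z j - a)\<^sup>2)"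
proof -
  have "L j * (z j - c)\<^sup>2 \<le> L j * (2 * (z j - a)\<^sup>2 + 2 * (a - c)\<^sup>2)" if "j \<in> J" for j
  proof (rule mult_left_mono)
    have "2 * (z j - a)\<^sup>2 + 2 * (a - c)\<^sup>2 - (z j - c)\<^sup>2 = (z j - 2 * a + c)\<^sup>2"
      by (simp add: power2_eq_square algebra_simps)
    then show "(z j - c)\<^sup>2 \<le> 2 * (z j - a)\<^sup>2 + 2 * (a - c)\<^sup>2"
      using zero_le_power2[of "z j - 2 * a + c"] by linarith
  qed (use assms(2) that in auto)
  then have "(\<Sum>j\<in>J. L j * (z j - c)\<^sup>2) \<le> (\<Sum>j\<in>J. L j * (2 * (z j - a)\<^sup>2 + 2 * (a - c)\<^sup>2))"
    by (rule sum_mono)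
  also have "\<dots> = 2 * (\<Sum>j\<in>J. L j * (z j - a)\<^sup>2) + 2 * (\<Sum>j\<in>J. L j) * (a - c)\<^sup>2"
    by (simp add: algebra_simps sum.distrib sum_distrib_left sum_distrib_right)
  finally have "(\<Sum>j\<in>J. L j * (z j - c)\<^sup>2)
      \<le> 2 * (\<Sum>j\<in>J. L j * (z j - a)\<^sup>2) + 2 * (\<Sum>j\<in>J. L j) * (a - c)\<^sup>2" .
  moreover have "s * (a - c)\<^sup>2 \<le> 2 * s * (a - c)\<^sup>2" using assms(1) by simp
  moreover have "2 * (s + (\<Sum>j\<in>J. L j)) * (a - c)\<^sup>2 = 2 * s * (a - c)\<^sup>2 + 2 * (\<Sum>j\<in>J. L j) * (a - c)\<^sup>2"
    by (simp add: algebra_simps)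
  ultimately show ?thesis by linarith
qed

lemma augmented_energy_bound:
  fixes sigma :: "nat \<Rightarrow> real" and y :: "anode \<Rightarrow> real"
  assumes lam: "0 < lam" and C: "0 < C"
    and S_nonneg: "\<forall>x\<in>aug_nodes n m. 0 \<le> Sigma_diag sigma Lw x"
    and center: "\<forall>i<n. sigma i + (\<Sum>j<m. Lw i j) \<le> C"
    and virtual: "\<forall>i<n. \<forall>j<m. Lw i j \<le> C / lam * (mu (Ev i j))\<^sup>2"
    and poincare: "\<forall>a. lam * (\<Sum>i<n. (a i - (\<Sum>k<n. a k) / n)\<^sup>2) \<le> dirichlet_energy E mu a"
    and balanced: "(\<Sum>x\<in>aug_nodes n m. Sigma_diag sigma Lw x * y x) = 0"
  shows "lam / (2 * C) * (\<Sum>x\<in>aug_nodes n m. Sigma_diag sigma Lw x * (y x)\<^sup>2)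
    \<le> dirichlet_energy E mu (\<lambda>i. y (Cn i)) + (\<Sum>i<n. \<Sum>j<m. (mu (Ev i j))\<^sup>2 * (y (Cn i) - y (Vn i j))\<^sup>2)"
    (is "_ \<le> ?energy + ?virtual")
proof -
  define a where "a = (\<lambda>i. y (Cn i))"
  define c where "c = (\<Sum>k<n. a k) / n"
  have sigma_nonneg: "0 \<le> sigma i" if "i < n" for i
    using S_nonneg[rule_format, of "Cn i"] that by (simp add: aug_nodes_def)
  have Lw_nonneg: "0 \<le> Lw i j" if "i < n" "j < m" for i j
    using S_nonneg[rule_format, of "Vn i j"] that by (simp add: aug_nodes_def)
  have "(\<Sum>x\<in>aug_nodes n m. Sigma_diag sigma Lw x * (y x)\<^sup>2)
      \<le> (\<Sum>x\<in>aug_nodes n m. Sigma_diag sigma Lw x * (y x - c)\<^sup>2)"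
    by (rule weighted_sum_sq_le_shift[OF S_nonneg balanced])
  also have "\<dots> = (\<Sum>i<n. sigma i * (a i - c)\<^sup>2 + (\<Sum>j<m. Lw i j * (y (Vn i j) - c)\<^sup>2))"
    by (simp add: sum_aug_nodes sum.distrib a_def)
  also have "\<dots> \<le> (\<Sum>i<n. 2 * (sigma i + (\<Sum>j<m. Lw i j)) * (a i - c)\<^sup>2
      + 2 * (\<Sum>j<m. Lw i j * (y (Vn i j) - a i)\<^sup>2))"
    using sigma_nonneg Lw_nonneg by (intro sum_mono star_variance_bound) auto
  also have "\<dots> \<le> (\<Sum>i<n. 2 * C * (a i - c)\<^sup>2
      + 2 * (\<Sum>j<m. C / lam * ((mu (Ev i j))\<^sup>2 * (a i - y (Vn i j))\<^sup>2)))"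
  proof (intro sum_mono add_mono mult_left_mono mult_right_mono)
    fix i j assume "i \<in> {..<n}" "j \<in> {..<m}"
    then show "Lw i j * (y (Vn i j) - a i)\<^sup>2 \<le> C / lam * ((mu (Ev i j))\<^sup>2 * (a i - y (Vn i j))\<^sup>2)"
      using virtual mult_right_mono[of "Lw i j" "C / lam * (mu (Ev i j))\<^sup>2" "(a i - y (Vn i j))\<^sup>2"]
      by (simp add: power2_commute mult.assoc)
  qed (use center in auto)
  also have "\<dots> = 2 * C * ((\<Sum>i<n. (a i - c)\<^sup>2) + ?virtual / lam)"
    by (simp add: sum.distrib sum_distrib_left sum_divide_distrib a_def algebra_simps)
  also have "\<dots> \<le> 2 * C * (?energy / lam + ?virtual / lam)"
    using poincare[rule_format, of a] lam C by (simp add: c_def a_def field_simps)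
  finally show ?thesis using lam C by (simp add: field_simps)
qed

lemma one_le_kappa:
  fixes sigma :: "nat \<Rightarrow> real"
  assumes "0 < sigma i" and "\<forall>j<m. 0 \<le> Lw i j"
  shows "1 \<le> kappa sigma Lw m i"
proof -
  have "0 \<le> (\<Sum>j<m. Lw i j) / sigma i" using assms by (intro divide_nonneg_pos sum_nonneg) auto
  then show ?thesis by (simp add: kappa_def)
qed

lemma center_weights_le:
  fixes sigma :: "nat \<Rightarrow> real"
  assumes "\<forall>i<n. 0 < sigma i" and "\<forall>i<n. \<forall>j<m. 0 \<le> Lw i j"
    and "\<forall>i<n. sigma i \<le> sig" and "\<forall>i<n. kappa sigma Lw m i \<le> kap"
  shows "\<forall>i<n. sigma i + (\<Sum>j<m. Lw i j) \<le> sig * kap"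
proof (intro allI impI)
  fix i assume "i < n"
  then have "0 < sigma i" "\<forall>j<m. 0 \<le> Lw i j" "sigma i \<le> sig" "kappa sigma Lw m i \<le> kap"
    using assms by auto
  have "sigma i + (\<Sum>j<m. Lw i j) = sigma i * kappa sigma Lw m i"
    using \<open>0 < sigma i\<close> by (simp add: kappa_def field_simps)
  also have "\<dots> \<le> sig * kap"
    using \<open>sigma i \<le> sig\<close> \<open>kappa sigma Lw m i \<le> kap\<close> \<open>0 < sigma i\<close>
      one_le_kappa[where sigma=sigma and Lw=Lw, OF \<open>0 < sigma i\<close> \<open>\<forall>j<m. 0 \<le> Lw i j\<close>]
    by (intro mult_mono) auto
  finally show "sigma i + (\<Sum>j<m. Lw i j) \<le> sig * kap" .
qed

lemma virtual_weights_le: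
  fixes sigma :: "nat \<Rightarrow> real"
  assumes "0 < lam" and "\<forall>i<n. 0 < sigma i" and "\<forall>i<n. \<forall>j<m. 0 \<le> Lw i j"
    and "\<forall>i<n. sigma i \<le> sig" and "\<forall>i<n. kappa sigma Lw m i \<le> kap"
    and mu: "\<forall>i<n. \<forall>j<m. (mu (Ev i j))\<^sup>2 = lam / (sig * kappa sigma Lw m i) * Lw i j"
  shows "\<forall>i<n. \<forall>j<m. Lw i j \<le> sig * kap / lam * (mu (Ev i j))\<^sup>2"
proof (intro allI impI)
  fix i j assume "i < n" "j < m"
  then have "0 < sigma i" and Lw: "\<forall>j<m. 0 \<le> Lw i j"
    and "sigma i \<le> sig" "kappa sigma Lw m i \<le> kap" using assms by auto
  have k: "1 \<le> kappa sigma Lw m i"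
    by (rule one_le_kappa[where sigma=sigma and Lw=Lw, OF \<open>0 < sigma i\<close> Lw])
  have "sig * kap / lam * (mu (Ev i j))\<^sup>2 = kap / kappa sigma Lw m i * Lw i j"
    using mu \<open>i < n\<close> \<open>j < m\<close> \<open>0 < lam\<close> \<open>0 < sigma i\<close> \<open>sigma i \<le> sig\<close> k
    by (simp add: field_simps)
  moreover have "1 \<le> kap / kappa sigma Lw m i" using \<open>kappa sigma Lw m i \<le> kap\<close> k by simp
  ultimately show "Lw i j \<le> sig * kap / lam * (mu (Ev i j))\<^sup>2"
    using mult_right_mono[of 1 "kap / kappa sigma Lw m i" "Lw i j"] Lw \<open>j < m\<close> by simp
qed

lemma quad_form_Ltilde_ge:
  fixes sigma :: "nat \<Rightarrow> real"
  assumes E_sub: "E \<subseteq> {..<n} \<times> {..<n}" and lam: "0 < lam" and C: "0 < C"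
    and S_pos: "\<forall>x\<in>aug_nodes n m. 0 < Sigma_diag sigma Lw x"
    and center: "\<forall>i<n. sigma i + (\<Sum>j<m. Lw i j) \<le> C"
    and virtual: "\<forall>i<n. \<forall>j<m. Lw i j \<le> C / lam * (mu (Ev i j))\<^sup>2"
    and poincare: "\<forall>a. lam * (\<Sum>i<n. (a i - (\<Sum>k<n. a k) / n)\<^sup>2) \<le> dirichlet_energy E mu a"
    and orth: "inner_on (aug_nodes n m) (\<lambda>x. sqrt (Sigma_diag sigma Lw x)) v = 0"
  shows "lam / (2 * C) * sum_sq (aug_nodes n m) v
    \<le> quad_form (aug_nodes n m) (Ltilde E n m mu sigma Lw) v"
proof -
  let ?V = "aug_nodes n m" and ?S = "Sigma_diag sigma Lw"
  define y where "y = (\<lambda>x. v x / sqrt (?S x))"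
  have "quad_form ?V (Ltilde E n m mu sigma Lw) v = dirichlet_energy E mu (\<lambda>i. y (Cn i))
      + (\<Sum>i<n. \<Sum>j<m. (mu (Ev i j))\<^sup>2 * (y (Cn i) - y (Vn i j))\<^sup>2)"
    unfolding Ltilde_diag_scaled quad_form_diag_scaled y_def by (rule quad_form_AAT[OF E_sub])
  moreover have "sum_sq ?V v = (\<Sum>x\<in>?V. ?S x * (y x)\<^sup>2)"
    unfolding sum_sq_def
  proof (intro sum.cong refl)
    fix x assume "x \<in> ?V"
    then have "0 < ?S x" using S_pos by blast
    then have "(sqrt (?S x))\<^sup>2 = ?S x" by simp
    then show "(v x)\<^sup>2 = ?S x * (y x)\<^sup>2"
      using \<open>0 < ?S x\<close> by (simp add: y_def power_divide)
  qed
  moreover have "(\<Sum>x\<in>?V. ?S x * y x) = inner_on ?V (\<lambda>x. sqrt (?S x)) v"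
    unfolding inner_on_def
  proof (intro sum.cong refl)
    fix x assume "x \<in> ?V"
    then have "0 < ?S x" using S_pos by blast
    then have "sqrt (?S x) * sqrt (?S x) = ?S x" by simp
    then show "?S x * y x = sqrt (?S x) * v x"
      using \<open>0 < ?S x\<close> by (simp add: y_def field_simps)
  qed
  ultimately show ?thesis
    using augmented_energy_bound[OF lam C _ center virtual poincare, of y] S_pos orth
    by (simp add: less_imp_le)
qed

lemma Sigma_diag_pos:
  fixes sigma :: "nat \<Rightarrow> real"
  assumes "\<forall>i<n. 0 < sigma i" and "\<forall>i<n. \<forall>j<m. 0 < Lw i j"
  shows "\<forall>x\<in>aug_nodes n m. 0 < Sigma_diag sigma Lw x"
  using assms by (auto simp: aug_nodes_def)

lemma mat_vec_Ltilde_sqrt_Sigma: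
  fixes sigma :: "nat \<Rightarrow> real"
  assumes "E \<subseteq> {..<n} \<times> {..<n}" and "\<forall>x\<in>aug_nodes n m. 0 < Sigma_diag sigma Lw x"
  shows "\<forall>x\<in>aug_nodes n m.
    mat_vec (aug_nodes n m) (Ltilde E n m mu sigma Lw) (\<lambda>x. sqrt (Sigma_diag sigma Lw x)) x = 0"
proof -
  have "\<forall>x\<in>aug_nodes n m. sqrt (Sigma_diag sigma Lw x) \<noteq> 0" using assms(2) by fastforce
  then show ?thesis
    by (simp add: Ltilde_diag_scaled mat_vec_diag_scaled mat_vec_AAT_const[OF assms(1)])
qed

theorem lemma5:
  fixes n m :: nat
    and E :: "(nat \<times> nat) set"
    and sigma :: "nat \<Rightarrow> real"
    and Lw :: "nat \<Rightarrow> nat \<Rightarrow> real"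
    and mu :: "aedge \<Rightarrow> real"
    and sig kap :: real
  assumes n2: "2 \<le> n"
    and E_sub: "E \<subseteq> {..<n} \<times> {..<n}"
    and E_loop: "\<forall>(k, l)\<in>E. k \<noteq> l"
    and E_orient: "\<forall>(k, l)\<in>E. (l, k) \<notin> E"
    and conn: "graph_connected n E"
    and sigma_pos: "\<forall>i<n. sigma i > 0"
    and Lw_pos: "\<forall>i<n. \<forall>j<m. Lw i j > 0"
    and mu_comm_pos: "\<forall>(k, l)\<in>E. mu (Ec k l) > 0"
    and mu_virt_pos: "\<forall>i<n. \<forall>j<m. mu (Ev i j) > 0"
    and sig_ge: "\<forall>i<n. sig \<ge> sigma i"
    and kap_ge: "\<forall>i<n. kap \<ge> kappa sigma Lw m i"
    and mu_virt: "\<forall>i<n. \<forall>j<m. (mu (Ev i j))\<^sup>2 =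
        lambda_min_pos {..<n} (lapL E mu) / (sig * kappa sigma Lw m i) * Lw i j"
  shows "lambda_min_pos (aug_nodes n m) (Ltilde E n m mu sigma Lw)
           \<ge> lambda_min_pos {..<n} (lapL E mu) / (2 * sig * kap)"
proof -
  let ?lam = "lambda_min_pos {..<n} (lapL E mu)" and ?L = "Ltilde E n m mu sigma Lw"
  let ?V = "aug_nodes n m" and ?d = "\<lambda>x. sqrt (Sigma_diag sigma Lw x)"
  have lam: "0 < ?lam"
    and poincare: "\<forall>a. ?lam * (\<Sum>i<n. (a i - (\<Sum>k<n. a k) / n)\<^sup>2) \<le> dirichlet_energy E mu a"
    using lapL_spectral_gap[OF n2 E_sub conn mu_comm_pos] by auto
  have Lw_nonneg: "\<forall>i<n. \<forall>j<m. 0 \<le> Lw i j" using Lw_pos by (simp add: less_imp_le)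
  note center = center_weights_le[OF sigma_pos Lw_nonneg sig_ge kap_ge]
  note virtual = virtual_weights_le[OF lam sigma_pos Lw_nonneg sig_ge kap_ge mu_virt]
  have "0 < sig * kap"
    using center[rule_format, of 0] sigma_pos Lw_nonneg n2 sum_nonneg[of "{..<m}" "Lw 0"]
    by fastforce
  note S_pos = Sigma_diag_pos[OF sigma_pos Lw_pos]
  have "?lam / (2 * (sig * kap)) \<le> lambda_min_pos ?V ?L"
  proof (rule lambda_min_pos_ge[OF finite_aug_nodes symmetric_on_Ltilde
        mat_vec_Ltilde_sqrt_Sigma[OF E_sub S_pos]])
    show "Cn 0 \<in> ?V" "Cn 1 \<in> ?V" "Cn 0 \<noteq> Cn 1" using n2 by (auto simp: aug_nodes_def)
    show "0 < ?lam / (2 * (sig * kap))" using lam \<open>0 < sig * kap\<close> by simp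
    show "\<forall>v. inner_on ?V ?d v = 0 \<longrightarrow> ?lam / (2 * (sig * kap)) * sum_sq ?V v \<le> quad_form ?V ?L v"
      using quad_form_Ltilde_ge[OF E_sub lam \<open>0 < sig * kap\<close> S_pos center virtual poincare] by blast
  qed
  then show ?thesis by (simp add: mult.assoc)
qed

end
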